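(* If $\hat R\ge 2r$ and $r\ge\sigma$, then the truncated perturbed adversary $\mathcal{A}'_\sigma$ satisfies $(r,\lambda_0)$ diversity for $\lambda_0=\Omega(\sigma^4/r^2)$.
   Context: Single parameter setting with Greedy (least squares estimate $\hat\beta^t$ at round $t$). Given an adaptive adversary that each round picks $\mu_1^t,\dots,\mu_k^t$, $\|\mu_i^t\|\le1$, as a function of the history, $\mathcal{A}'_\sigma$ outputs $x_i^t=\mu_i^t+e_i^t$ with $e_i^t=(Q^t)^{-1}z_i^t$, where $Q^t$ is orthonormal with $Q^t\hat\beta^t=(\|\hat\beta^t\|,0,\dots,0)$ and the coordinates of $z_i^t$ are independent $\mathcal{N}(0,\sigma^2)$ variables conditioned on lying in $[-\hat R,\hat R]$. A distribution $\mathcal{D}$ on $\mathbb{R}^d$ is $(r,\lambda_0)$-diverse if for all $\hat\beta$, all $\|\mu\|\le1$, all $\hat b\le r\|\hat\beta\|$, with $e\sim\mathcal{D}$, $x=\mu+e$: $\lambda_{\min}(\mathbb{E}[xx^\top\mid\hat\beta\cdot e\ge\hat b])\ge\lambda_0$; the adversary satisfies $(r,\lambda_0)$ diversity if each perturbation distribution (for every history) is $(r,\lambda_0)$-diverse. $\Omega(\cdot)$ hides an absolute constant. *)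

theory Defs
  imports "HOL-Probability.Probability"
begin

text \<open>Vectors in R^d are functions nat => real, only coordinates 0..d-1 matter;
  d x d matrices are functions nat => nat => real, only entries with indices < d matter.\<close>

definition dotp :: "nat \<Rightarrow> (nat \<Rightarrow> real) \<Rightarrow> (nat \<Rightarrow> real) \<Rightarrow> real" where
  "dotp d u v = (\<Sum>j<d. u j * v j)"

definition vnorm :: "nat \<Rightarrow> (nat \<Rightarrow> real) \<Rightarrow> real" where
  "vnorm d v = sqrt (dotp d v v)"

definition orthonormal_mat :: "nat \<Rightarrow> (nat \<Rightarrow> nat \<Rightarrow> real) \<Rightarrow> bool" where
  "orthonormal_mat d Q \<longleftrightarrow>
     (\<forall>i<d. \<forall>j<d. (\<Sum>k<d. Q i k * Q j k) = (if i = j then 1 else 0))"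

definition mat_eigenvalue :: "nat \<Rightarrow> (nat \<Rightarrow> nat \<Rightarrow> real) \<Rightarrow> real \<Rightarrow> bool" where
  "mat_eigenvalue d M k \<longleftrightarrow>
     (\<exists>v::nat \<Rightarrow> real. (\<exists>i<d. v i \<noteq> 0) \<and> (\<forall>i<d. (\<Sum>j<d. M i j * v j) = k * v i))"

definition lambda_min :: "nat \<Rightarrow> (nat \<Rightarrow> nat \<Rightarrow> real) \<Rightarrow> real" where
  "lambda_min d M = Min {k. mat_eigenvalue d M k}"

definition cond_measure :: "'a measure \<Rightarrow> 'a set \<Rightarrow> 'a measure" where
  "cond_measure M A = density M (\<lambda>x. indicator A x / emeasure M A)"

definition trunc_normal :: "real \<Rightarrow> real \<Rightarrow> real measure" where
  "trunc_normal \<sigma> R =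
     cond_measure (density lborel (\<lambda>x. ennreal (normal_density 0 \<sigma> x))) {-R..R}"

text \<open>Distribution of the perturbation e = Q^{-1} z = Q^T z (Q orthonormal), where z has
  independent trunc_normal coordinates.\<close>
definition pert_dist :: "nat \<Rightarrow> real \<Rightarrow> real \<Rightarrow> (nat \<Rightarrow> nat \<Rightarrow> real) \<Rightarrow> (nat \<Rightarrow> real) measure" where
  "pert_dist d \<sigma> R Q =
     distr (\<Pi>\<^sub>M i\<in>{..<d}. trunc_normal \<sigma> R) (\<Pi>\<^sub>M i\<in>{..<d}. lborel)
       (\<lambda>z. \<lambda>j\<in>{..<d}. \<Sum>i<d. Q i j * z i)"

definition cond_second_moment ::
  "nat \<Rightarrow> (nat \<Rightarrow> real) measure \<Rightarrow> (nat \<Rightarrow> real) \<Rightarrow> (nat \<Rightarrow> real) \<Rightarrow> real \<Rightarrow> (nat \<Rightarrow> nat \<Rightarrow> real)" where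
  "cond_second_moment d D \<beta> \<mu> b = (\<lambda>j k.
     \<integral>e. (\<mu> j + e j) * (\<mu> k + e k) \<partial>(cond_measure D {e \<in> space D. dotp d \<beta> e \<ge> b}))"

definition diverse_for :: "nat \<Rightarrow> real \<Rightarrow> real \<Rightarrow> (nat \<Rightarrow> real) measure \<Rightarrow> (nat \<Rightarrow> real) \<Rightarrow> bool" where
  "diverse_for d r lam0 D \<beta> \<longleftrightarrow>
     (\<forall>\<mu> b. vnorm d \<mu> \<le> 1 \<longrightarrow> b \<le> r * vnorm d \<beta> \<longrightarrow>
        lambda_min d (cond_second_moment d D \<beta> \<mu> b) \<ge> lam0)"

text \<open>The truncated perturbed adversary satisfies (r, lambda0)-diversity: for every
  current estimate betahat (any history) and every orthonormal Q rotating betahat onto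
  the first axis, the resulting perturbation distribution is diverse.\<close>
definition trunc_adv_diverse :: "nat \<Rightarrow> real \<Rightarrow> real \<Rightarrow> real \<Rightarrow> real \<Rightarrow> bool" where
  "trunc_adv_diverse d \<sigma> R r lam0 \<longleftrightarrow>
     (\<forall>\<beta> Q. orthonormal_mat d Q \<longrightarrow>
        (\<forall>i<d. (\<Sum>j<d. Q i j * \<beta> j) = (if i = 0 then vnorm d \<beta> else 0)) \<longrightarrow>
        diverse_for d r lam0 (pert_dist d \<sigma> R Q) \<beta>)"

end

theory Submission
  imports Defs "Jordan_Normal_Form.Char_Poly"
begin

text \<open>Rotate coordinates by \<open>Q\<close>: the perturbation is \<open>e = Q\<^sup>T z\<close> with \<open>z\<close> having independent
  truncated Gaussian coordinates, and since \<open>Q \<beta> = \<parallel>\<beta>\<parallel> e\<^sub>0\<close> the conditioning event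
  \<open>\<beta> \<bullet> e \<ge> b\<close> becomes \<open>\<parallel>\<beta>\<parallel> z\<^sub>0 \<ge> b\<close>, an event about \<open>z\<^sub>0\<close> alone. For a direction \<open>v\<close> put
  \<open>w = Q v\<close>; then \<open>v \<bullet> x = v \<bullet> \<mu> + w \<bullet> z\<close>, and by independence and centredness of the
  coordinates \<open>z\<^sub>1, \<dots>\<close> the conditional second moment of \<open>v \<bullet> x\<close> splits as
  \<open>E[(a + w\<^sub>0 z\<^sub>0)\<^sup>2 | z\<^sub>0 \<in> S] + E[z\<^sub>1\<^sup>2] \<Sum>\<^sub>i\<^sub>\<ge>\<^sub>1 w\<^sub>i\<^sup>2\<close>.
  Both terms are controlled by a one-dimensional estimate: on \<open>[u, R]\<close> with \<open>u \<le> r\<close> the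
  Gaussian weight has variance at least of order \<open>\<sigma>\<^sup>4/r\<^sup>2\<close>. If \<open>u \<le> \<sigma>\<close>, an interval of
  length \<open>\<sigma>\<close> near the origin carries density \<open>\<ge> \<phi>(2\<sigma>)\<close>; otherwise the interval
  \<open>[u, u + \<sigma>\<^sup>2/u]\<close> carries density \<open>\<ge> e\<^sup>-\<^sup>3\<^sup>/\<^sup>2 \<phi>(u)\<close> while by Mills' inequality the whole
  tail has mass at most \<open>\<phi>(u) \<sigma>\<^sup>2/u\<close>. Hence the quadratic form of the conditional second
  moment matrix is at least \<open>c \<sigma>\<^sup>4/r\<^sup>2 \<parallel>v\<parallel>\<^sup>2\<close>, which bounds its least eigenvalue.\<close>

section \<open>Symmetric matrices\<close>

lemma sum_squares_pos:
  fixes v :: "nat \<Rightarrow> real"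
  assumes "\<exists>i<d. v i \<noteq> 0"
  shows "0 < (\<Sum>i<d. (v i)\<^sup>2)"
proof -
  from assms obtain i where i: "i < d" "v i \<noteq> 0" by blast
  have "(v i)\<^sup>2 \<le> (\<Sum>i<d. (v i)\<^sup>2)" using i by (intro member_le_sum) auto
  moreover have "(v i)\<^sup>2 > 0" using i by simp
  ultimately show ?thesis by linarith
qed

lemma mult_mat_vec_mat_nth:
  fixes f :: "nat \<Rightarrow> nat \<Rightarrow> 'a::comm_ring_1"
  assumes "v \<in> carrier_vec d" "i < d"
  shows "(mat d d (\<lambda>(i,j). f i j) *\<^sub>v v) $ i = (\<Sum>j<d. f i j * v $ j)"
  using assms by (simp add: scalar_prod_def lessThan_atLeast0)

lemma mat_eigenvalue_imp_eigenvalue: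
  fixes M :: "nat \<Rightarrow> nat \<Rightarrow> real"
  assumes "mat_eigenvalue d M k"
  shows "eigenvalue (mat d d (\<lambda>(i,j). M i j)) k"
proof -
  from assms obtain v where v: "\<exists>i<d. v i \<noteq> 0" "\<forall>i<d. (\<Sum>j<d. M i j * v j) = k * v i"
    unfolding mat_eigenvalue_def by auto
  let ?v = "vec d v"
  have c: "?v \<in> carrier_vec d" by simp
  have "?v \<noteq> 0\<^sub>v d" using v(1) by (auto simp: vec_eq_iff)
  moreover have "mat d d (\<lambda>(i,j). M i j) *\<^sub>v ?v = k \<cdot>\<^sub>v ?v"
  proof (rule eq_vecI)
    fix i assume "i < dim_vec (k \<cdot>\<^sub>v ?v)"
    then have i: "i < d" by simp
    show "(mat d d (\<lambda>(i,j). M i j) *\<^sub>v ?v) $ i = (k \<cdot>\<^sub>v ?v) $ i"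
      using mult_mat_vec_mat_nth[OF c i, of M] v(2) i by simp
  qed simp
  ultimately show ?thesis unfolding eigenvalue_def eigenvector_def
    by (intro exI[of _ ?v]) simp
qed

lemma finite_mat_eigenvalues:
  fixes M :: "nat \<Rightarrow> nat \<Rightarrow> real"
  shows "finite {k. mat_eigenvalue d M k}"
proof -
  let ?A = "mat d d (\<lambda>(i,j). M i j)"
  have A: "?A \<in> carrier_mat d d" by simp
  have "char_poly ?A \<noteq> 0" using degree_monic_char_poly[OF A] by auto
  then have "finite {k. poly (char_poly ?A) k = 0}" by (rule poly_roots_finite)
  moreover have "{k. mat_eigenvalue d M k} \<subseteq> {k. poly (char_poly ?A) k = 0}"
    using mat_eigenvalue_imp_eigenvalue eigenvalue_root_char_poly[OF A] by blast
  ultimately show ?thesis by (rule finite_subset[rotated])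
qed

lemma complex_eigenvector_exists:
  fixes M :: "nat \<Rightarrow> nat \<Rightarrow> real"
  assumes "d \<ge> 1"
  shows "\<exists>a (v::nat \<Rightarrow> complex). (\<exists>i<d. v i \<noteq> 0) \<and>
     (\<forall>i<d. (\<Sum>j<d. complex_of_real (M i j) * v j) = a * v i)"
proof -
  let ?A = "mat d d (\<lambda>(i,j). complex_of_real (M i j))"
  have A: "?A \<in> carrier_mat d d" by simp
  obtain as where as: "char_poly ?A = (\<Prod>a\<leftarrow>as. [:- a, 1:])" "length as = d"
    using char_poly_factorized[OF A] by blast
  then obtain a where a: "a \<in> set as" using assms by (cases as) auto
  have "poly (char_poly ?A) a = (\<Prod>x\<leftarrow>as. a - x)"
    unfolding as(1) by (induction as) (auto simp: algebra_simps)
  also have "\<dots> = 0" using a by (simp add: prod_list_zero_iff)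
  finally have "eigenvalue ?A a" using eigenvalue_root_char_poly[OF A] by simp
  then obtain v where v: "v \<in> carrier_vec d" "v \<noteq> 0\<^sub>v d" "?A *\<^sub>v v = a \<cdot>\<^sub>v v"
    unfolding eigenvalue_def eigenvector_def by auto
  have "\<exists>i<d. v $ i \<noteq> 0"
  proof (rule ccontr)
    assume "\<not> ?thesis"
    then have "v = 0\<^sub>v d" using v(1) by (intro eq_vecI) auto
    with v(2) show False by simp
  qed
  moreover have "(\<Sum>j<d. complex_of_real (M i j) * v $ j) = a * v $ i" if i: "i < d" for i
    using arg_cong[OF v(3), of "\<lambda>x. x $ i"]
      mult_mat_vec_mat_nth[OF v(1) i, of "\<lambda>i j. complex_of_real (M i j)"] v(1) i by simp
  ultimately show ?thesis by blast
qed

text \<open>\<open>v\<^sup>* M v\<close> is both real and equal to \<open>a \<parallel>v\<parallel>\<^sup>2\<close>.\<close>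

lemma symmetric_mat_complex_eigenvalue_real:
  fixes M :: "nat \<Rightarrow> nat \<Rightarrow> real" and v :: "nat \<Rightarrow> complex"
  assumes sym: "\<And>i j. i < d \<Longrightarrow> j < d \<Longrightarrow> M i j = M j i"
    and nz: "\<exists>i<d. v i \<noteq> 0"
    and ev: "\<And>i. i < d \<Longrightarrow> (\<Sum>j<d. complex_of_real (M i j) * v j) = a * v i"
  shows "Im a = 0"
proof -
  define S where "S = (\<Sum>i<d. \<Sum>j<d. cnj (v i) * complex_of_real (M i j) * v j)"
  define n where "n = (\<Sum>i<d. cnj (v i) * v i)"
  have "S = (\<Sum>i<d. cnj (v i) * (\<Sum>j<d. complex_of_real (M i j) * v j))"
    unfolding S_def by (simp add: sum_distrib_left mult.assoc)
  also have "\<dots> = (\<Sum>i<d. a * (cnj (v i) * v i))"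
    using ev by (intro sum.cong) (simp_all add: mult.left_commute)
  also have "\<dots> = a * n" unfolding n_def by (simp add: sum_distrib_left)
  finally have S_eq: "S = a * n" .
  have "cnj S = (\<Sum>i<d. \<Sum>j<d. v i * complex_of_real (M i j) * cnj (v j))"
    unfolding S_def by (simp add: cnj_sum)
  also have "\<dots> = (\<Sum>j<d. \<Sum>i<d. v i * complex_of_real (M i j) * cnj (v j))"
    by (rule sum.swap)
  also have "\<dots> = S" unfolding S_def
    by (intro sum.cong refl) (simp add: sym mult.commute mult.left_commute)
  finally have S_real: "cnj S = S" .
  have n_eq: "n = complex_of_real (\<Sum>i<d. (cmod (v i))\<^sup>2)"
    unfolding n_def of_real_sum
    by (intro sum.cong refl) (metis complex_norm_square mult.commute of_real_power)
  have "0 < (\<Sum>i<d. (cmod (v i))\<^sup>2)" using nz by (intro sum_squares_pos) auto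
  then have "n \<noteq> 0" unfolding n_eq of_real_eq_0_iff by linarith
  moreover have "cnj a * n = a * n"
    using S_real S_eq n_eq by (metis complex_cnj_complex_of_real complex_cnj_mult)
  ultimately have "cnj a = a" by simp
  then show ?thesis by (auto simp: complex_eq_iff)
qed

text \<open>The real or the imaginary part of a complex eigenvector is a real eigenvector.\<close>

lemma symmetric_mat_eigenvalue_exists:
  fixes M :: "nat \<Rightarrow> nat \<Rightarrow> real"
  assumes d: "d \<ge> 1" and sym: "\<And>i j. i < d \<Longrightarrow> j < d \<Longrightarrow> M i j = M j i"
  shows "\<exists>k. mat_eigenvalue d M k"
proof -
  obtain a and v :: "nat \<Rightarrow> complex" where nz: "\<exists>i<d. v i \<noteq> 0" and
    ev: "\<And>i. i < d \<Longrightarrow> (\<Sum>j<d. complex_of_real (M i j) * v j) = a * v i"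
    using complex_eigenvector_exists[OF d, of M] by blast
  have a_eq: "a = complex_of_real (Re a)"
    using symmetric_mat_complex_eigenvalue_real[OF sym nz ev] by (simp add: complex_eq_iff)
  have ev_Re: "\<And>i. i < d \<Longrightarrow> (\<Sum>j<d. M i j * Re (v j)) = Re a * Re (v i)"
   and ev_Im: "\<And>i. i < d \<Longrightarrow> (\<Sum>j<d. M i j * Im (v j)) = Re a * Im (v i)"
  proof -
    fix i assume i: "i < d"
    have e: "(\<Sum>j<d. complex_of_real (M i j) * v j) = complex_of_real (Re a) * v i"
      using ev[OF i] a_eq by simp
    show "(\<Sum>j<d. M i j * Re (v j)) = Re a * Re (v i)"
      using arg_cong[OF e, of Re] by (simp add: Re_sum)
    show "(\<Sum>j<d. M i j * Im (v j)) = Re a * Im (v i)"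
      using arg_cong[OF e, of Im] by (simp add: Im_sum)
  qed
  from nz obtain i where i: "i < d" "v i \<noteq> 0" by blast
  show ?thesis
  proof (cases "Re (v i) = 0")
    case False
    then show ?thesis unfolding mat_eigenvalue_def using ev_Re i
      by (intro exI[of _ "Re a"] exI[of _ "\<lambda>j. Re (v j)"]) auto
  next
    case True
    then have "Im (v i) \<noteq> 0" using i(2) complex_eq_iff by force
    then show ?thesis unfolding mat_eigenvalue_def using ev_Im i
      by (intro exI[of _ "Re a"] exI[of _ "\<lambda>j. Im (v j)"]) auto
  qed
qed

lemma lambda_min_ge_quadratic_form:
  fixes M :: "nat \<Rightarrow> nat \<Rightarrow> real"
  assumes d: "d \<ge> 1" and sym: "\<And>i j. i < d \<Longrightarrow> j < d \<Longrightarrow> M i j = M j i"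
    and form: "\<And>v. c * (\<Sum>i<d. (v i)\<^sup>2) \<le> (\<Sum>i<d. \<Sum>j<d. v i * M i j * v j)"
  shows "c \<le> lambda_min d M"
proof -
  let ?l = "lambda_min d M"
  have "finite {k. mat_eigenvalue d M k}" by (rule finite_mat_eigenvalues)
  moreover have "{k. mat_eigenvalue d M k} \<noteq> {}"
    using symmetric_mat_eigenvalue_exists[OF d sym] by auto
  ultimately have "?l \<in> {k. mat_eigenvalue d M k}"
    unfolding lambda_min_def by (rule Min_in)
  then obtain v where nz: "\<exists>i<d. v i \<noteq> 0" and ev: "\<forall>i<d. (\<Sum>j<d. M i j * v j) = ?l * v i"
    unfolding mat_eigenvalue_def by blast
  have "(\<Sum>i<d. \<Sum>j<d. v i * M i j * v j) = (\<Sum>i<d. v i * (\<Sum>j<d. M i j * v j))"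
    by (simp add: sum_distrib_left mult.assoc)
  also have "\<dots> = (\<Sum>i<d. ?l * (v i)\<^sup>2)"
    using ev by (intro sum.cong) (auto simp: power2_eq_square)
  finally have "c * (\<Sum>i<d. (v i)\<^sup>2) \<le> ?l * (\<Sum>i<d. (v i)\<^sup>2)"
    using form[of v] by (simp add: sum_distrib_left)
  then show ?thesis using sum_squares_pos[OF nz] by simp
qed

lemma orthonormal_mat_columns:
  assumes "orthonormal_mat d Q" "j < d" "k < d"
  shows "(\<Sum>i<d. Q i j * Q i k) = (if j = k then 1 else 0)"
proof -
  let ?A = "mat d d (\<lambda>(i,j). Q i j)"
  have A: "?A \<in> carrier_mat d d" and At: "transpose_mat ?A \<in> carrier_mat d d" by auto
  have "?A * transpose_mat ?A = 1\<^sub>m d"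
  proof (rule eq_matI)
    fix i j assume "i < dim_row (1\<^sub>m d)" "j < dim_col (1\<^sub>m d)"
    then show "(?A * transpose_mat ?A) $$ (i, j) = 1\<^sub>m d $$ (i, j)"
      using assms(1) unfolding orthonormal_mat_def
      by (simp add: scalar_prod_def lessThan_atLeast0)
  qed auto
  then have "transpose_mat ?A * ?A = 1\<^sub>m d" by (rule mat_mult_left_right_inverse[OF A At])
  then have "(transpose_mat ?A * ?A) $$ (j, k) = 1\<^sub>m d $$ (j, k)" by simp
  then show ?thesis using assms(2,3) by (simp add: scalar_prod_def lessThan_atLeast0)
qed

lemma orthonormal_mat_sum_squares:
  fixes v :: "nat \<Rightarrow> real"
  assumes Q: "orthonormal_mat d Q"
  shows "(\<Sum>l<d. (\<Sum>i<d. Q l i * v i)\<^sup>2) = (\<Sum>i<d. (v i)\<^sup>2)"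
proof -
  have "(\<Sum>l<d. (\<Sum>i<d. Q l i * v i)\<^sup>2) = (\<Sum>l<d. \<Sum>i<d. \<Sum>j<d. v i * v j * (Q l i * Q l j))"
    by (simp add: power2_eq_square sum_product mult_ac)
  also have "\<dots> = (\<Sum>i<d. \<Sum>l<d. \<Sum>j<d. v i * v j * (Q l i * Q l j))" by (rule sum.swap)
  also have "\<dots> = (\<Sum>i<d. \<Sum>j<d. \<Sum>l<d. v i * v j * (Q l i * Q l j))"
    by (rule sum.cong[OF refl], rule sum.swap)
  also have "\<dots> = (\<Sum>i<d. \<Sum>j<d. v i * v j * (if i = j then 1 else 0))"
    using orthonormal_mat_columns[OF Q] by (simp add: sum_distrib_left[symmetric])
  also have "\<dots> = (\<Sum>i<d. (v i)\<^sup>2)"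
    by (simp add: if_distrib sum.delta power2_eq_square cong: if_cong)
  finally show ?thesis .
qed

lemma abs_affine_le:
  fixes w x :: "'i \<Rightarrow> real"
  assumes "\<forall>i\<in>I. \<bar>x i\<bar> \<le> R"
  shows "\<bar>c + (\<Sum>i\<in>I. w i * x i)\<bar> \<le> \<bar>c\<bar> + (\<Sum>i\<in>I. \<bar>w i\<bar> * R)"
proof -
  have "\<bar>(\<Sum>i\<in>I. w i * x i)\<bar> \<le> (\<Sum>i\<in>I. \<bar>w i * x i\<bar>)" by (rule sum_abs)
  also have "\<dots> \<le> (\<Sum>i\<in>I. \<bar>w i\<bar> * R)"
    using assms by (intro sum_mono) (auto simp: abs_mult intro: mult_left_mono)
  finally show ?thesis by linarith
qed

lemma sum_fun_upd_insert:
  assumes "finite I" "j \<notin> I"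
  shows "(\<Sum>i\<in>insert j I. w i * (x(j := y)) i) = w j * y + (\<Sum>i\<in>I. w i * x i)"
proof -
  have "(\<Sum>i\<in>I. w i * (x(j := y)) i) = (\<Sum>i\<in>I. w i * x i)"
    using assms by (intro sum.cong) auto
  then show ?thesis using assms by simp
qed

lemma dotp_rotation:
  fixes Q :: "nat \<Rightarrow> nat \<Rightarrow> real"
  assumes d: "d \<ge> 1" and Q\<beta>: "\<forall>i<d. (\<Sum>j<d. Q i j * \<beta> j) = (if i = 0 then c else 0)"
  shows "dotp d \<beta> (\<lambda>j. \<Sum>i<d. Q i j * z i) = c * z 0"
proof -
  have "dotp d \<beta> (\<lambda>j. \<Sum>i<d. Q i j * z i) = (\<Sum>j<d. \<Sum>i<d. z i * (Q i j * \<beta> j))"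
    unfolding dotp_def by (simp add: sum_distrib_left mult_ac)
  also have "\<dots> = (\<Sum>i<d. \<Sum>j<d. z i * (Q i j * \<beta> j))" by (rule sum.swap)
  also have "\<dots> = (\<Sum>i<d. z i * (if i = 0 then c else 0))"
    using Q\<beta> by (simp add: sum_distrib_left[symmetric])
  also have "\<dots> = c * z 0"
    using d by (simp add: if_distrib sum.delta mult.commute cong: if_cong)
  finally show ?thesis .
qed

lemma quadratic_form_rotated_affine:
  fixes Q :: "nat \<Rightarrow> nat \<Rightarrow> real" and v m z :: "nat \<Rightarrow> real"
  shows "(\<Sum>i<d. \<Sum>j<d. v i * v j * ((m i + (\<Sum>l<d. Q l i * z l)) * (m j + (\<Sum>l<d. Q l j * z l))))
    = ((\<Sum>i<d. v i * m i) + (\<Sum>l<d. (\<Sum>i<d. Q l i * v i) * z l))\<^sup>2"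
proof -
  have "(\<Sum>i<d. v i * (\<Sum>l<d. Q l i * z l)) = (\<Sum>i<d. \<Sum>l<d. Q l i * v i * z l)"
    by (simp add: sum_distrib_left mult_ac)
  also have "\<dots> = (\<Sum>l<d. \<Sum>i<d. Q l i * v i * z l)" by (rule sum.swap)
  finally have linear: "(\<Sum>i<d. v i * (m i + (\<Sum>l<d. Q l i * z l)))
      = (\<Sum>i<d. v i * m i) + (\<Sum>l<d. (\<Sum>i<d. Q l i * v i) * z l)"
    by (simp add: distrib_left sum.distrib sum_distrib_right)
  have "(\<Sum>i<d. \<Sum>j<d. v i * v j * ((m i + (\<Sum>l<d. Q l i * z l)) * (m j + (\<Sum>l<d. Q l j * z l))))
      = (\<Sum>i<d. v i * (m i + (\<Sum>l<d. Q l i * z l))) * (\<Sum>j<d. v j * (m j + (\<Sum>l<d. Q l j * z l)))"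
    by (simp add: sum_product mult_ac)
  then show ?thesis unfolding linear by (simp add: power2_eq_square)
qed

lemma halfline_inter_Icc:
  fixes c b r R :: real
  assumes "c \<ge> 0" "b \<le> r * c" "2 * r \<le> R" "r > 0"
  shows "\<exists>u. {y. b \<le> c * y} \<inter> {-R..R} = {u..R} \<and> - R \<le> u \<and> u \<le> r"
proof (cases "c = 0")
  case True
  then show ?thesis using assms by (intro exI[of _ "-R"]) auto
next
  case False
  then have "c > 0" using assms by simp
  then have "b / c \<le> r" and "{y. b \<le> c * y} = {b / c..}"
    using assms by (auto simp: divide_le_eq mult.commute)
  then show ?thesis using assms by (intro exI[of _ "max (b / c) (- R)"]) auto
qed

lemma set_integrable_continuous_Icc:
  fixes f :: "real \<Rightarrow> real"
  assumes "continuous_on UNIV f"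
  shows "set_integrable lborel {a..b} f"
proof -
  have "integrable lborel (\<lambda>x. f x * indicator {a..b} x)"
    using assms by (intro borel_integrable_atLeastAtMost) (simp add: continuous_on_eq_continuous_at)
  then show ?thesis unfolding set_integrable_def by (simp add: mult.commute)
qed

lemma set_integral_Icc_FTC:
  fixes f F :: "real \<Rightarrow> real"
  assumes ab: "a \<le> b" and F: "\<And>x. (F has_real_derivative f x) (at x)"
    and f: "continuous_on UNIV f"
  shows "(LINT x:{a..b}|lborel. f x) = F b - F a"
proof -
  have "(LINT x:{a..b}|lborel. f x) = (LBINT x=a..b. f x)"
    using ab by (simp add: interval_integral_Icc)
  also have "\<dots> = F b - F a"
  proof (rule interval_integral_FTC_finite)
    show "continuous_on {min a b..max a b} f" using f by (rule continuous_on_subset) auto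
    fix x show "(F has_vector_derivative f x) (at x within {min a b..max a b})"
      using F[of x]
      by (simp add: has_real_derivative_iff_has_vector_derivative[symmetric] has_field_derivative_at_within)
  qed
  finally show ?thesis .
qed

lemma set_integral_Icc_mono_set:
  fixes f :: "real \<Rightarrow> real"
  assumes "continuous_on UNIV f" "\<And>x. f x \<ge> 0" "u \<le> p" "q \<le> R"
  shows "(LINT x:{p..q}|lborel. f x) \<le> (LINT x:{u..R}|lborel. f x)"
  using set_integrable_continuous_Icc[OF assms(1)] assms(2-)
  unfolding set_integrable_def set_lebesgue_integral_def
  by (intro integral_mono) (auto split: split_indicator)

lemma set_integral_Icc_const_lower:
  fixes f :: "real \<Rightarrow> real"
  assumes "a \<le> b" "continuous_on UNIV f" "\<And>y. a \<le> y \<Longrightarrow> y \<le> b \<Longrightarrow> c \<le> f y"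
  shows "c * (b - a) \<le> (LINT y:{a..b}|lborel. f y)"
proof -
  have "(LINT y:{a..b}|lborel. c) = c * b - c * a"
    by (rule set_integral_Icc_FTC[OF assms(1)]) (auto intro!: derivative_eq_intros)
  moreover have "(LINT y:{a..b}|lborel. c) \<le> (LINT y:{a..b}|lborel. f y)"
    using assms by (intro set_integral_mono set_integrable_continuous_Icc) (auto intro: continuous_intros)
  ultimately show ?thesis by (simp add: algebra_simps)
qed

lemma set_integral_Icc_square_lower:
  fixes L p m :: real
  assumes "L \<ge> 0"
  shows "L^3 / 12 \<le> (LINT y:{p..p+L}|lborel. (y - m)\<^sup>2)"
proof -
  have "(LINT y:{p..p+L}|lborel. (y - m)\<^sup>2) = (p + L - m)^3/3 - (p - m)^3/3"
    using assms by (intro set_integral_Icc_FTC)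
      (auto intro!: derivative_eq_intros continuous_intros simp: power2_eq_square)
  also have "\<dots> = L * (p - m + L/2)\<^sup>2 + L^3/12"
    by (simp add: power2_eq_square power3_eq_cube field_simps)
  finally show ?thesis using assms by simp
qed

lemma set_integral_Icc_weighted_square_lower:
  fixes \<phi> :: "real \<Rightarrow> real"
  assumes cont: "continuous_on UNIV \<phi>" and L: "L \<ge> 0" and c: "c \<ge> 0"
    and lower: "\<And>y. p \<le> y \<Longrightarrow> y \<le> p + L \<Longrightarrow> c \<le> \<phi> y"
  shows "c * L^3 / 12 \<le> (LINT y:{p..p+L}|lborel. (y - m)\<^sup>2 * \<phi> y)"
proof -
  have "c * L^3/12 \<le> c * (LINT y:{p..p+L}|lborel. (y - m)\<^sup>2)"
    using mult_left_mono[OF set_integral_Icc_square_lower[OF L, of p m] c] by simp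
  also have "\<dots> = (LINT y:{p..p+L}|lborel. c * (y - m)\<^sup>2)" by simp
  also have "\<dots> \<le> (LINT y:{p..p+L}|lborel. (y - m)\<^sup>2 * \<phi> y)"
  proof (rule set_integral_mono)
    show "set_integrable lborel {p..p + L} (\<lambda>y. c * (y - m)\<^sup>2)"
      by (rule set_integrable_continuous_Icc) (intro continuous_intros)
    show "set_integrable lborel {p..p + L} (\<lambda>y. (y - m)\<^sup>2 * \<phi> y)"
      by (rule set_integrable_continuous_Icc) (intro continuous_intros cont)
    fix y assume "y \<in> {p..p+L}"
    then show "c * (y - m)\<^sup>2 \<le> (y - m)\<^sup>2 * \<phi> y"
      using mult_right_mono[OF lower[of y] zero_le_power2[of "y - m"]] by (simp add: mult.commute)
  qed
  finally show ?thesis by simp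
qed

section \<open>The Gaussian density\<close>

lemma continuous_on_normal_density: "\<sigma> > 0 \<Longrightarrow> continuous_on UNIV (normal_density 0 \<sigma>)"
  unfolding normal_density_def by (intro continuous_intros) auto

lemma normal_density_centered:
  "normal_density 0 \<sigma> y = (1 / sqrt (2 * pi * \<sigma>\<^sup>2)) * exp (- y\<^sup>2 / (2 * \<sigma>\<^sup>2))"
  unfolding normal_density_def by simp

lemma normal_density_antimono_abs:
  assumes "\<bar>x\<bar> \<le> \<bar>y\<bar>"
  shows "normal_density 0 \<sigma> y \<le> normal_density 0 \<sigma> x"
proof -
  have "x\<^sup>2 / (2 * \<sigma>\<^sup>2) \<le> y\<^sup>2 / (2 * \<sigma>\<^sup>2)"
    using assms by (intro divide_right_mono) (auto simp: abs_le_square_iff)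
  then have "exp (- y\<^sup>2 / (2 * \<sigma>\<^sup>2)) \<le> exp (- x\<^sup>2 / (2 * \<sigma>\<^sup>2))" by simp
  then show ?thesis unfolding normal_density_centered by (intro mult_left_mono) auto
qed

lemma set_integral_normal_density_le_1:
  assumes "\<sigma> > 0"
  shows "(LINT y:{u..R}|lborel. normal_density 0 \<sigma> y) \<le> 1"
proof -
  have "(LINT y:{u..R}|lborel. normal_density 0 \<sigma> y) \<le> (\<integral>y. normal_density 0 \<sigma> y \<partial>lborel)"
    using set_integrable_continuous_Icc[OF continuous_on_normal_density[OF assms]] assms
    unfolding set_integrable_def set_lebesgue_integral_def
    by (intro integral_mono integrable_normal_density) (auto split: split_indicator)
  then show ?thesis using integral_normal_density[of \<sigma> 0] assms by linarith
qed

text \<open>Mills' inequality, obtained by comparing \<open>\<phi>\<close> with its tangent exponential at \<open>u\<close>.\<close>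

lemma normal_tail_le_Mills:
  assumes \<sigma>_pos: "\<sigma> > 0" and u: "u > 0" "u \<le> R"
  shows "(LINT y:{u..R}|lborel. normal_density 0 \<sigma> y) \<le> normal_density 0 \<sigma> u * \<sigma>\<^sup>2 / u"
proof -
  define g where "g y = normal_density 0 \<sigma> u * exp (- u * (y - u) / \<sigma>\<^sup>2)" for y
  define G where "G y = - (normal_density 0 \<sigma> u * \<sigma>\<^sup>2 / u) * exp (- u * (y - u) / \<sigma>\<^sup>2)" for y
  have cont_g: "continuous_on UNIV g" unfolding g_def using \<sigma>_pos by (intro continuous_intros) auto
  have "(LINT y:{u..R}|lborel. normal_density 0 \<sigma> y) \<le> (LINT y:{u..R}|lborel. g y)"
  proof (rule set_integral_mono)
    show "set_integrable lborel {u..R} (normal_density 0 \<sigma>)"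
      by (rule set_integrable_continuous_Icc[OF continuous_on_normal_density[OF \<sigma>_pos]])
    show "set_integrable lborel {u..R} g" by (rule set_integrable_continuous_Icc[OF cont_g])
    fix y
    have "- y\<^sup>2 / (2 * \<sigma>\<^sup>2) \<le> - u\<^sup>2 / (2 * \<sigma>\<^sup>2) + - u * (y - u) / \<sigma>\<^sup>2"
    proof -
      have "2 * u * y - u\<^sup>2 \<le> y\<^sup>2" using sum_power2_ge_zero[of "y - u" 0]
        by (simp add: power2_eq_square algebra_simps)
      then have "- y\<^sup>2 / (2 * \<sigma>\<^sup>2) \<le> - (2 * u * y - u\<^sup>2) / (2 * \<sigma>\<^sup>2)"
        by (intro divide_right_mono) auto
      moreover have "- u\<^sup>2 / (2 * \<sigma>\<^sup>2) + - u * (y - u) / \<sigma>\<^sup>2 = - (2 * u * y - u\<^sup>2) / (2 * \<sigma>\<^sup>2)"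
        using \<sigma>_pos by (simp add: field_simps power2_eq_square)
      ultimately show ?thesis by simp
    qed
    then have "exp (- y\<^sup>2 / (2 * \<sigma>\<^sup>2)) \<le> exp (- u\<^sup>2 / (2 * \<sigma>\<^sup>2)) * exp (- u * (y - u) / \<sigma>\<^sup>2)"
      by (simp add: exp_add[symmetric])
    from mult_left_mono[OF this, of "1 / sqrt (2 * pi * \<sigma>\<^sup>2)"]
    show "normal_density 0 \<sigma> y \<le> g y" unfolding g_def normal_density_centered
      by (simp add: mult.assoc)
  qed
  also have "\<dots> = G R - G u"
    using u \<sigma>_pos cont_g unfolding G_def g_def
    by (intro set_integral_Icc_FTC) (auto intro!: derivative_eq_intros simp: field_simps)
  also have "\<dots> = normal_density 0 \<sigma> u * \<sigma>\<^sup>2 / u * (1 - exp (- u * (R - u) / \<sigma>\<^sup>2))"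
    unfolding G_def by (simp add: algebra_simps)
  also have "\<dots> \<le> normal_density 0 \<sigma> u * \<sigma>\<^sup>2 / u"
    using u by (intro mult_left_le) auto
  finally show ?thesis .
qed

lemma sqrt_2pi_le_3: "sqrt (2 * pi) \<le> 3"
proof -
  have "sqrt (2 * pi) \<le> sqrt 9" using pi_less_4 by (intro real_sqrt_le_mono) simp
  also have "sqrt 9 = (3::real)" by (simp add: real_sqrt_eq_iff)
  finally show ?thesis .
qed

lemma exp_2_le_9: "exp (2::real) \<le> 9"
proof -
  have "exp (2::real) = exp 1 * exp 1" by (simp add: exp_add[symmetric])
  also have "\<dots> \<le> 3 * 3" using exp_le by (intro mult_mono) auto
  finally show ?thesis by simp
qed

lemma set_integral_normal_density_pos:
  assumes \<sigma>_pos: "\<sigma> > 0" and u: "- R \<le> u" "u < R"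
  shows "0 < (LINT y:{u..R}|lborel. normal_density 0 \<sigma> y)"
proof -
  have "0 < normal_density 0 \<sigma> R * (R - u)" using normal_density_pos[OF \<sigma>_pos] u by simp
  also have "\<dots> \<le> (LINT y:{u..R}|lborel. normal_density 0 \<sigma> y)"
    using u by (intro set_integral_Icc_const_lower continuous_on_normal_density[OF \<sigma>_pos]
        normal_density_antimono_abs) auto
  finally show ?thesis .
qed

lemma normal_weighted_square_lower_near:
  assumes \<sigma>_pos: "\<sigma> > 0" and u: "u \<le> \<sigma>" and R: "2 * \<sigma> \<le> R"
  shows "\<sigma>\<^sup>2 / 1000 \<le> (LINT y:{u..R}|lborel. (y - m)\<^sup>2 * normal_density 0 \<sigma> y)"
proof -
  let ?\<phi> = "normal_density 0 \<sigma>"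
  define p where "p = max u 0"
  have "?\<phi> (2 * \<sigma>) * \<sigma>^3 / 12 \<le> (LINT y:{p..p+\<sigma>}|lborel. (y - m)\<^sup>2 * ?\<phi> y)"
    using u \<sigma>_pos unfolding p_def
    by (intro set_integral_Icc_weighted_square_lower continuous_on_normal_density normal_density_antimono_abs)
      auto
  also have "\<dots> \<le> (LINT y:{u..R}|lborel. (y - m)\<^sup>2 * ?\<phi> y)"
    using u R \<sigma>_pos unfolding p_def
    by (intro set_integral_Icc_mono_set continuous_intros continuous_on_normal_density) auto
  finally have lower: "?\<phi> (2 * \<sigma>) * \<sigma>^3 / 12 \<le> (LINT y:{u..R}|lborel. (y - m)\<^sup>2 * ?\<phi> y)" .
  define K where "K = exp (-2) / sqrt (2 * pi)"
  have "1 / 9 / 3 \<le> K"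
    unfolding K_def using sqrt_2pi_le_3 exp_2_le_9
    by (intro frac_le) (auto simp: exp_minus field_simps)
  then have "\<sigma>\<^sup>2 * (1 / 1000) \<le> \<sigma>\<^sup>2 * (K / 12)" by (intro mult_left_mono) auto
  also have "\<sigma>\<^sup>2 * (K / 12) = ?\<phi> (2 * \<sigma>) * \<sigma>^3 / 12"
    using \<sigma>_pos unfolding normal_density_centered K_def
    by (simp add: real_sqrt_mult power2_eq_square power3_eq_cube field_simps)
  finally have "\<sigma>\<^sup>2 / 1000 \<le> ?\<phi> (2 * \<sigma>) * \<sigma>^3 / 12" by simp
  with lower show ?thesis by linarith
qed

text \<open>With \<open>L = \<sigma>\<^sup>2/u\<close>, the density on \<open>[u, u + L]\<close> is at least \<open>e\<^sup>-\<^sup>3\<^sup>/\<^sup>2 \<phi>(u)\<close>, while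
  by Mills' inequality the whole tail has mass at most \<open>\<phi>(u) L\<close>.\<close>

lemma normal_weighted_square_lower_far:
  assumes \<sigma>_pos: "\<sigma> > 0" and u: "\<sigma> < u" "u + \<sigma> \<le> R"
  shows "(\<sigma>\<^sup>2 / u)\<^sup>2 / 1000 * (LINT y:{u..R}|lborel. normal_density 0 \<sigma> y)
    \<le> (LINT y:{u..R}|lborel. (y - m)\<^sup>2 * normal_density 0 \<sigma> y)"
proof -
  let ?\<phi> = "normal_density 0 \<sigma>"
  define L where "L = \<sigma>\<^sup>2 / u"
  have u_pos: "u > 0" using u \<sigma>_pos by linarith
  have L_pos: "L > 0" unfolding L_def using \<sigma>_pos u_pos by simp
  have L_le: "L \<le> \<sigma>" unfolding L_def using u \<sigma>_pos u_pos by (simp add: divide_le_eq power2_eq_square)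
  have uL: "u * L = \<sigma>\<^sup>2" unfolding L_def using u_pos by simp
  have density_lower: "?\<phi> u * exp (-3/2) \<le> ?\<phi> y" if "u \<le> y" "y \<le> u + L" for y
  proof -
    have "y\<^sup>2 \<le> (u + L)\<^sup>2" using that u_pos by (intro power_mono) auto
    also have "\<dots> = u\<^sup>2 + 2 * \<sigma>\<^sup>2 + L\<^sup>2" using uL by (simp add: power2_eq_square algebra_simps)
    also have "\<dots> \<le> u\<^sup>2 + 3 * \<sigma>\<^sup>2" using L_le L_pos power_mono[OF L_le, of 2] by simp
    finally have "y\<^sup>2 / (2 * \<sigma>\<^sup>2) \<le> (u\<^sup>2 + 3 * \<sigma>\<^sup>2) / (2 * \<sigma>\<^sup>2)" by (intro divide_right_mono) auto
    also have "\<dots> = u\<^sup>2 / (2 * \<sigma>\<^sup>2) + 3/2" using \<sigma>_pos by (simp add: field_simps)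
    finally have "exp (- u\<^sup>2 / (2 * \<sigma>\<^sup>2)) * exp (-3/2) \<le> exp (- y\<^sup>2 / (2 * \<sigma>\<^sup>2))"
      by (simp add: exp_add[symmetric])
    from mult_left_mono[OF this, of "1 / sqrt (2 * pi * \<sigma>\<^sup>2)"]
    show ?thesis unfolding normal_density_centered by (simp add: mult.assoc)
  qed
  have \<phi>u_pos: "?\<phi> u > 0" using \<sigma>_pos by (rule normal_density_pos)
  have "?\<phi> u * exp (-3/2) * L^3 / 12 \<le> (LINT y:{u..u+L}|lborel. (y - m)\<^sup>2 * ?\<phi> y)"
    using density_lower L_pos \<phi>u_pos
    by (intro set_integral_Icc_weighted_square_lower continuous_on_normal_density[OF \<sigma>_pos]) auto
  also have "\<dots> \<le> (LINT y:{u..R}|lborel. (y - m)\<^sup>2 * ?\<phi> y)"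
    using u L_le \<sigma>_pos
    by (intro set_integral_Icc_mono_set continuous_intros continuous_on_normal_density) auto
  finally have lower: "?\<phi> u * exp (-3/2) * L^3 / 12 \<le> (LINT y:{u..R}|lborel. (y - m)\<^sup>2 * ?\<phi> y)" .
  have "(LINT y:{u..R}|lborel. ?\<phi> y) \<le> ?\<phi> u * L"
    using normal_tail_le_Mills[OF \<sigma>_pos u_pos, of R] u \<sigma>_pos unfolding L_def by simp
  then have "L\<^sup>2 / 1000 * (LINT y:{u..R}|lborel. ?\<phi> y) \<le> L\<^sup>2 / 1000 * (?\<phi> u * L)"
    by (intro mult_left_mono) auto
  also have "\<dots> \<le> ?\<phi> u * exp (-3/2) * L^3 / 12"
  proof -
    have "exp (3/2::real) \<le> 9"
      using exp_2_le_9 exp_le_cancel_iff[of "3/2::real" 2] by linarith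
    then have "1 / 1000 \<le> exp (-3/2::real) / 12" by (simp add: exp_minus field_simps)
    then have "1 / 1000 * (?\<phi> u * L^3) \<le> exp (-3/2::real) / 12 * (?\<phi> u * L^3)"
      using \<phi>u_pos L_pos by (intro mult_right_mono) auto
    then show ?thesis by (simp add: power2_eq_square power3_eq_cube field_simps)
  qed
  finally show ?thesis using lower unfolding L_def by linarith
qed

lemma normal_weighted_square_lower:
  assumes \<sigma>_pos: "\<sigma> > 0" and \<sigma>_le: "\<sigma> \<le> r" and r_le: "2 * r \<le> R" and u: "u \<le> r"
  shows "\<sigma>^4 / r\<^sup>2 / 1000 * (LINT y:{u..R}|lborel. normal_density 0 \<sigma> y)
    \<le> (LINT y:{u..R}|lborel. (y - m)\<^sup>2 * normal_density 0 \<sigma> y)"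
proof -
  have mass_nonneg: "0 \<le> (LINT y:{u..R}|lborel. normal_density 0 \<sigma> y)"
    unfolding set_lebesgue_integral_def by (auto intro!: Bochner_Integration.integral_nonneg)
  show ?thesis
  proof (cases "u \<le> \<sigma>")
    case True
    have "\<sigma>\<^sup>2 * \<sigma>\<^sup>2 \<le> \<sigma>\<^sup>2 * r\<^sup>2"
      using \<sigma>_pos \<sigma>_le by (intro mult_left_mono power_mono) auto
    then have "\<sigma>^4 / r\<^sup>2 \<le> \<sigma>\<^sup>2"
      using \<sigma>_pos \<sigma>_le by (simp add: divide_le_eq power4_eq_xxxx power2_eq_square mult.assoc)
    then have "\<sigma>^4 / r\<^sup>2 / 1000 * (LINT y:{u..R}|lborel. normal_density 0 \<sigma> y) \<le> \<sigma>\<^sup>2 / 1000 * 1"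
      using set_integral_normal_density_le_1[OF \<sigma>_pos, of u R] mass_nonneg by (intro mult_mono) auto
    also have "\<dots> \<le> (LINT y:{u..R}|lborel. (y - m)\<^sup>2 * normal_density 0 \<sigma> y)"
      using True \<sigma>_le r_le normal_weighted_square_lower_near[OF \<sigma>_pos] by simp
    finally show ?thesis .
  next
    case False
    have "u\<^sup>2 \<le> r\<^sup>2" using False \<sigma>_pos u by (intro power_mono) auto
    moreover have "0 < u\<^sup>2" using False \<sigma>_pos by simp
    ultimately have "\<sigma>^4 / r\<^sup>2 \<le> \<sigma>^4 / u\<^sup>2"
      by (intro divide_left_mono mult_pos_pos) auto
    also have "\<dots> = (\<sigma>\<^sup>2 / u)\<^sup>2" by (simp add: power_divide flip: power_mult)
    finally have "\<sigma>^4 / r\<^sup>2 \<le> (\<sigma>\<^sup>2 / u)\<^sup>2" .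
    then have "\<sigma>^4 / r\<^sup>2 / 1000 * (LINT y:{u..R}|lborel. normal_density 0 \<sigma> y)
        \<le> (\<sigma>\<^sup>2 / u)\<^sup>2 / 1000 * (LINT y:{u..R}|lborel. normal_density 0 \<sigma> y)"
      using mass_nonneg by (intro mult_right_mono) auto
    also have "\<dots> \<le> (LINT y:{u..R}|lborel. (y - m)\<^sup>2 * normal_density 0 \<sigma> y)"
      using False u \<sigma>_le r_le by (intro normal_weighted_square_lower_far[OF \<sigma>_pos]) auto
    finally show ?thesis .
  qed
qed

lemma integral_cond_measure_distr:
  fixes g :: "_ \<Rightarrow> real"
  assumes [measurable]: "F \<in> measurable M N" "E \<in> sets N" "g \<in> borel_measurable N"
    and "finite_measure M" and pos: "measure M (F -` E \<inter> space M) > 0"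
  shows "integral\<^sup>L (cond_measure (distr M N F) E) g
     = (\<integral>z. indicator E (F z) * g (F z) \<partial>M) / measure M (F -` E \<inter> space M)"
proof -
  define p where "p = measure M (F -` E \<inter> space M)"
  have "emeasure (distr M N F) E = ennreal p"
    unfolding p_def using emeasure_distr[OF assms(1,2)] finite_measure.emeasure_eq_measure[OF assms(4)]
    by simp
  then have density_eq:
    "cond_measure (distr M N F) E = density (distr M N F) (\<lambda>x. ennreal (indicator E x / p))"
    unfolding cond_measure_def
    using pos divide_ennreal[of 1 p] unfolding p_def
    by (intro density_cong AE_I2) (auto split: split_indicator)
  have "integral\<^sup>L (cond_measure (distr M N F) E) g = (\<integral>x. (indicator E x / p) *\<^sub>R g x \<partial>distr M N F)"
    unfolding density_eq using pos unfolding p_def by (subst integral_density) auto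
  also have "\<dots> = (\<integral>z. indicator E (F z) * g (F z) \<partial>M) / p"
    by (subst integral_distr) auto
  finally show ?thesis unfolding p_def .
qed

section \<open>The truncated Gaussian\<close>

definition normal_mass_Icc :: "real \<Rightarrow> real \<Rightarrow> real" where
  "normal_mass_Icc \<sigma> R = (LINT x:{-R..R}|lborel. normal_density 0 \<sigma> x)"

definition trunc_normal_density :: "real \<Rightarrow> real \<Rightarrow> real \<Rightarrow> real" where
  "trunc_normal_density \<sigma> R x = indicator {-R..R} x * normal_density 0 \<sigma> x / normal_mass_Icc \<sigma> R"

definition trunc_normal_second_moment :: "real \<Rightarrow> real \<Rightarrow> real" where
  "trunc_normal_second_moment \<sigma> R = (\<integral>y. y\<^sup>2 \<partial>trunc_normal \<sigma> R)"

lemma trunc_normal_density_measurable[measurable]: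
  "trunc_normal_density \<sigma> R \<in> borel_measurable borel"
  unfolding trunc_normal_density_def by measurable

lemma emeasure_normal_Icc:
  assumes "\<sigma> > 0"
  shows "emeasure (density lborel (\<lambda>x. ennreal (normal_density 0 \<sigma> x))) {-R..R}
    = ennreal (normal_mass_Icc \<sigma> R)"
proof -
  have "emeasure (density lborel (\<lambda>x. ennreal (normal_density 0 \<sigma> x))) {-R..R}
     = (\<integral>\<^sup>+ x. ennreal (indicator {-R..R} x *\<^sub>R normal_density 0 \<sigma> x) \<partial>lborel)"
    by (subst emeasure_density) (auto intro!: nn_integral_cong split: split_indicator)
  also have "\<dots> = ennreal (normal_mass_Icc \<sigma> R)"
    using set_integrable_continuous_Icc[OF continuous_on_normal_density[OF assms], of "-R" R]
    unfolding normal_mass_Icc_def set_integrable_def set_lebesgue_integral_def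
    by (intro nn_integral_eq_integral) auto
  finally show ?thesis .
qed

abbreviation trunc_normal_PiM :: "real \<Rightarrow> real \<Rightarrow> 'i set \<Rightarrow> ('i \<Rightarrow> real) measure" where
  "trunc_normal_PiM \<sigma> R I \<equiv> \<Pi>\<^sub>M i\<in>I. trunc_normal \<sigma> R"

context
  fixes \<sigma> R :: real
  assumes \<sigma>_pos: "\<sigma> > 0" and R_pos: "R > 0"
begin

lemma normal_mass_Icc_pos: "normal_mass_Icc \<sigma> R > 0"
  unfolding normal_mass_Icc_def using R_pos by (intro set_integral_normal_density_pos[OF \<sigma>_pos]) auto

lemma trunc_normal_density_nonneg: "trunc_normal_density \<sigma> R x \<ge> 0"
  unfolding trunc_normal_density_def using normal_mass_Icc_pos by simp

lemma trunc_normal_eq_density: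
  "trunc_normal \<sigma> R = density lborel (\<lambda>x. ennreal (trunc_normal_density \<sigma> R x))"
proof -
  have "trunc_normal \<sigma> R = density lborel (\<lambda>x. ennreal (normal_density 0 \<sigma> x) *
      (indicator {-R..R} x / ennreal (normal_mass_Icc \<sigma> R)))"
    unfolding trunc_normal_def cond_measure_def emeasure_normal_Icc[OF \<sigma>_pos]
    by (rule density_density_eq) auto
  also have "\<dots> = density lborel (\<lambda>x. ennreal (trunc_normal_density \<sigma> R x))"
  proof (intro density_cong AE_I2)
    fix x
    have "ennreal (normal_density 0 \<sigma> x) * (1 / ennreal (normal_mass_Icc \<sigma> R))
        = ennreal (normal_density 0 \<sigma> x * (1 / normal_mass_Icc \<sigma> R))"
      using divide_ennreal[of 1 "normal_mass_Icc \<sigma> R"] normal_mass_Icc_pos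
      by (simp add: ennreal_mult'[symmetric])
    then show "ennreal (normal_density 0 \<sigma> x) * (indicator {-R..R} x / ennreal (normal_mass_Icc \<sigma> R))
        = ennreal (trunc_normal_density \<sigma> R x)"
      unfolding trunc_normal_density_def by (simp split: split_indicator)
  qed measurable
  finally show ?thesis .
qed

lemma sets_trunc_normal[simp, measurable_cong]: "sets (trunc_normal \<sigma> R) = sets borel"
  unfolding trunc_normal_eq_density by simp

lemma space_trunc_normal[simp]: "space (trunc_normal \<sigma> R) = UNIV"
  unfolding trunc_normal_eq_density by simp

lemma prob_space_trunc_normal: "prob_space (trunc_normal \<sigma> R)"
proof
  have integrable: "integrable lborel (trunc_normal_density \<sigma> R)"
    using set_integrable_continuous_Icc[OF continuous_on_normal_density[OF \<sigma>_pos], of "-R" R]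
    unfolding set_integrable_def trunc_normal_density_def by (simp add: mult.commute)
  have "(\<integral>x. trunc_normal_density \<sigma> R x \<partial>lborel) = normal_mass_Icc \<sigma> R / normal_mass_Icc \<sigma> R"
    unfolding trunc_normal_density_def normal_mass_Icc_def set_lebesgue_integral_def by simp
  then have "(\<integral>x. trunc_normal_density \<sigma> R x \<partial>lborel) = 1" using normal_mass_Icc_pos by simp
  then show "emeasure (trunc_normal \<sigma> R) (space (trunc_normal \<sigma> R)) = 1"
    unfolding trunc_normal_eq_density using integrable trunc_normal_density_nonneg
    by (subst emeasure_density) (auto simp: nn_integral_eq_integral)
qed

lemma integral_trunc_normal:
  assumes [measurable]: "g \<in> borel_measurable borel"
  shows "(\<integral>x. g x \<partial>trunc_normal \<sigma> R) = (\<integral>x. trunc_normal_density \<sigma> R x * g x \<partial>lborel)"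
  unfolding trunc_normal_eq_density using trunc_normal_density_nonneg
  by (subst integral_density) auto

lemma AE_trunc_normal_abs_le: "AE x in trunc_normal \<sigma> R. \<bar>x\<bar> \<le> R"
  unfolding trunc_normal_eq_density
  by (subst AE_density) (auto simp: trunc_normal_density_def split: split_indicator)

lemma integrable_trunc_normal_bounded:
  fixes g :: "real \<Rightarrow> real"
  assumes [measurable]: "g \<in> borel_measurable borel" and bound: "\<And>x. \<bar>x\<bar> \<le> R \<Longrightarrow> \<bar>g x\<bar> \<le> B"
  shows "integrable (trunc_normal \<sigma> R) g"
proof -
  interpret prob_space "trunc_normal \<sigma> R" by (rule prob_space_trunc_normal)
  show ?thesis
    using AE_trunc_normal_abs_le bound
    by (intro integrable_const_bound[where B=B]) (auto elim!: eventually_mono)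
qed

lemma integral_trunc_normal_indicator:
  assumes g: "continuous_on UNIV g" and [measurable]: "S \<in> sets borel"
    and S_restr: "S \<inter> {-R..R} = {u..R}"
  shows "(\<integral>y. indicator S y * g y \<partial>trunc_normal \<sigma> R)
    = (LINT y:{u..R}|lborel. g y * normal_density 0 \<sigma> y) / normal_mass_Icc \<sigma> R"
proof -
  have [measurable]: "g \<in> borel_measurable borel"
    using g by (simp add: continuous_on_eq_continuous_within borel_measurable_continuous_onI)
  have "indicator {-R..R} y * indicator S y = (indicator {u..R} y :: real)" for y
    using S_restr by (auto split: split_indicator)
  then have "(\<integral>y. trunc_normal_density \<sigma> R y * (indicator S y * g y) \<partial>lborel)
      = (\<integral>y. (indicator {u..R} y *\<^sub>R (g y * normal_density 0 \<sigma> y)) / normal_mass_Icc \<sigma> R \<partial>lborel)"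
    unfolding trunc_normal_density_def by (intro Bochner_Integration.integral_cong) (auto simp: field_simps)
  then show ?thesis
    by (subst integral_trunc_normal) (auto simp: set_lebesgue_integral_def)
qed

lemma measure_trunc_normal:
  assumes [measurable]: "S \<in> sets borel" and S_restr: "S \<inter> {-R..R} = {u..R}"
  shows "measure (trunc_normal \<sigma> R) S
    = (LINT y:{u..R}|lborel. normal_density 0 \<sigma> y) / normal_mass_Icc \<sigma> R"
proof -
  interpret prob_space "trunc_normal \<sigma> R" by (rule prob_space_trunc_normal)
  have "measure (trunc_normal \<sigma> R) S = (\<integral>y. indicator S y * 1 \<partial>trunc_normal \<sigma> R)" by simp
  also have "\<dots> = (LINT y:{u..R}|lborel. normal_density 0 \<sigma> y) / normal_mass_Icc \<sigma> R"
    using S_restr by (subst integral_trunc_normal_indicator) auto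
  finally show ?thesis .
qed

lemma trunc_normal_mean_zero: "(\<integral>y. y \<partial>trunc_normal \<sigma> R) = 0"
proof -
  have "(\<integral>y. y \<partial>trunc_normal \<sigma> R) = (\<integral>y. indicator UNIV y * y \<partial>trunc_normal \<sigma> R)" by simp
  also have "\<dots> = (LINT y:{-R..R}|lborel. y * normal_density 0 \<sigma> y) / normal_mass_Icc \<sigma> R"
    by (rule integral_trunc_normal_indicator) (auto intro: continuous_intros)
  also have "(LINT y:{-R..R}|lborel. y * normal_density 0 \<sigma> y)
      = (- \<sigma>\<^sup>2 * normal_density 0 \<sigma> R) - (- \<sigma>\<^sup>2 * normal_density 0 \<sigma> (-R))"
    using R_pos \<sigma>_pos unfolding normal_density_centered
    by (intro set_integral_Icc_FTC)
      (auto intro!: derivative_eq_intros continuous_intros simp: field_simps power2_eq_square)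
  also have "\<dots> = 0" unfolding normal_density_centered by simp
  finally show ?thesis by simp
qed

lemma trunc_normal_restricted_quadratic_lower:
  assumes \<sigma>_le: "\<sigma> \<le> r" and r_le: "2 * r \<le> R"
    and [measurable]: "S \<in> sets borel" and S_restr: "S \<inter> {-R..R} = {u..R}" and u: "u \<le> r"
  shows "\<sigma>^4 / r\<^sup>2 / 1000 * w\<^sup>2 * measure (trunc_normal \<sigma> R) S
    \<le> (\<integral>y. indicator S y * (a + w * y)\<^sup>2 \<partial>trunc_normal \<sigma> R)"
proof (cases "w = 0")
  case True
  interpret prob_space "trunc_normal \<sigma> R" by (rule prob_space_trunc_normal)
  show ?thesis using True by simp
next
  case False
  define J where "J f = (LINT y:{u..R}|lborel. f y * normal_density 0 \<sigma> y)" for f :: "real \<Rightarrow> real"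
  define m where "m = - a / w"
  have "(a + w * y)\<^sup>2 = w\<^sup>2 * (y - m)\<^sup>2" for y
    unfolding m_def using False by (simp add: field_simps power2_eq_square)
  then have J_eq: "J (\<lambda>y. (a + w * y)\<^sup>2) = w\<^sup>2 * J (\<lambda>y. (y - m)\<^sup>2)"
    unfolding J_def by (simp add: mult.assoc)
  have "\<sigma>^4 / r\<^sup>2 / 1000 * J (\<lambda>_. 1) \<le> J (\<lambda>y. (y - m)\<^sup>2)"
    unfolding J_def using normal_weighted_square_lower[OF \<sigma>_pos \<sigma>_le r_le u] by simp
  then have "w\<^sup>2 * (\<sigma>^4 / r\<^sup>2 / 1000 * J (\<lambda>_. 1)) \<le> J (\<lambda>y. (a + w * y)\<^sup>2)"
    unfolding J_eq by (rule mult_left_mono) simp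
  then have "w\<^sup>2 * (\<sigma>^4 / r\<^sup>2 / 1000 * J (\<lambda>_. 1)) / normal_mass_Icc \<sigma> R
      \<le> J (\<lambda>y. (a + w * y)\<^sup>2) / normal_mass_Icc \<sigma> R"
    using normal_mass_Icc_pos by (intro divide_right_mono) auto
  moreover have "(\<integral>y. indicator S y * (a + w * y)\<^sup>2 \<partial>trunc_normal \<sigma> R)
      = J (\<lambda>y. (a + w * y)\<^sup>2) / normal_mass_Icc \<sigma> R"
    unfolding J_def
    by (rule integral_trunc_normal_indicator[OF _ \<open>S \<in> sets borel\<close> S_restr]) (intro continuous_intros)
  moreover have "measure (trunc_normal \<sigma> R) S = J (\<lambda>_. 1) / normal_mass_Icc \<sigma> R"
    unfolding J_def using measure_trunc_normal S_restr by simp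
  ultimately show ?thesis by (simp add: mult_ac)
qed

lemma trunc_normal_second_moment_lower:
  assumes "\<sigma> \<le> r" "2 * r \<le> R"
  shows "\<sigma>^4 / r\<^sup>2 / 1000 \<le> trunc_normal_second_moment \<sigma> R"
proof -
  interpret prob_space "trunc_normal \<sigma> R" by (rule prob_space_trunc_normal)
  have "\<sigma>^4 / r\<^sup>2 / 1000 * 1\<^sup>2 * measure (trunc_normal \<sigma> R) UNIV
      \<le> (\<integral>y. indicator UNIV y * (0 + 1 * y)\<^sup>2 \<partial>trunc_normal \<sigma> R)"
    using assms \<sigma>_pos by (intro trunc_normal_restricted_quadratic_lower[where u="-R"]) auto
  then show ?thesis unfolding trunc_normal_second_moment_def using prob_space by simp
qed

lemma product_sigma_finite_trunc_normal: "product_sigma_finite (\<lambda>_. trunc_normal \<sigma> R)"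
  unfolding product_sigma_finite_def
  using prob_space_imp_sigma_finite[OF prob_space_trunc_normal] by simp

lemma prob_space_trunc_normal_PiM: "prob_space (trunc_normal_PiM \<sigma> R I)"
  by (rule prob_space_PiM) (rule prob_space_trunc_normal)

lemma measurable_trunc_normal_PiM_component:
  "i \<in> I \<Longrightarrow> (\<lambda>x. x i) \<in> borel_measurable (trunc_normal_PiM \<sigma> R I)"
  using measurable_component_singleton[of i I "\<lambda>_. trunc_normal \<sigma> R"]
  unfolding measurable_cong_sets[OF refl sets_trunc_normal] .

lemma measurable_trunc_normal_PiM_affine:
  "(\<lambda>x. c + (\<Sum>i\<in>I. w i * x i)) \<in> borel_measurable (trunc_normal_PiM \<sigma> R I)"
  by (intro borel_measurable_add borel_measurable_const borel_measurable_sum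
      borel_measurable_times measurable_trunc_normal_PiM_component) auto

lemma measure_trunc_normal_PiM_component:
  assumes "i \<in> I" "S \<in> sets borel"
  shows "measure (trunc_normal_PiM \<sigma> R I) {z \<in> space (trunc_normal_PiM \<sigma> R I). z i \<in> S}
    = measure (trunc_normal \<sigma> R) S"
proof -
  have "measure (trunc_normal \<sigma> R) S = measure (distr (trunc_normal_PiM \<sigma> R I) (trunc_normal \<sigma> R) (\<lambda>z. z i)) S"
    using assms by (subst distr_PiM_component) (auto intro: prob_space_trunc_normal)
  also have "\<dots> = measure (trunc_normal_PiM \<sigma> R I) {z \<in> space (trunc_normal_PiM \<sigma> R I). z i \<in> S}"
    using assms by (subst measure_distr) (auto intro!: arg_cong[where f="measure _"]
        measurable_component_singleton)
  finally show ?thesis ..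
qed

lemma integrable_trunc_normal_PiM_bounded:
  fixes f :: "_ \<Rightarrow> real"
  assumes "finite I" and f: "f \<in> borel_measurable (trunc_normal_PiM \<sigma> R I)"
    and bound: "\<And>x. \<forall>i\<in>I. \<bar>x i\<bar> \<le> R \<Longrightarrow> \<bar>f x\<bar> \<le> B"
  shows "integrable (trunc_normal_PiM \<sigma> R I) f"
proof -
  interpret prob_space "trunc_normal_PiM \<sigma> R I" by (rule prob_space_trunc_normal_PiM)
  have "AE x in trunc_normal_PiM \<sigma> R I. \<forall>i\<in>I. \<bar>x i\<bar> \<le> R"
    using assms(1) by (intro AE_finite_allI AE_PiM_component prob_space_trunc_normal
        AE_trunc_normal_abs_le)
  then show ?thesis
    using bound f by (intro integrable_const_bound[where B=B]) (auto elim!: eventually_mono)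
qed

lemma integrable_trunc_normal_PiM_indicator_affine_product:
  assumes "finite I" "k \<in> I" "S \<in> sets borel"
  shows "integrable (trunc_normal_PiM \<sigma> R I)
    (\<lambda>x. indicator S (x k) * ((c + (\<Sum>i\<in>I. w i * x i)) * (c' + (\<Sum>i\<in>I. w' i * x i))))"
proof (rule integrable_trunc_normal_PiM_bounded[OF assms(1)])
  show "(\<lambda>x. indicator S (x k) * ((c + (\<Sum>i\<in>I. w i * x i)) * (c' + (\<Sum>i\<in>I. w' i * x i))))
      \<in> borel_measurable (trunc_normal_PiM \<sigma> R I)"
    using assms measurable_trunc_normal_PiM_affine
    by (intro borel_measurable_times measurable_compose[OF measurable_trunc_normal_PiM_component
          borel_measurable_indicator]) auto
  fix x assume x: "\<forall>i\<in>I. \<bar>x i\<bar> \<le> R"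
  have "\<bar>indicator S (x k) * ((c + (\<Sum>i\<in>I. w i * x i)) * (c' + (\<Sum>i\<in>I. w' i * x i)))\<bar>
      \<le> \<bar>c + (\<Sum>i\<in>I. w i * x i)\<bar> * \<bar>c' + (\<Sum>i\<in>I. w' i * x i)\<bar>"
    by (auto split: split_indicator simp: abs_mult)
  also have "\<dots> \<le> (\<bar>c\<bar> + (\<Sum>i\<in>I. \<bar>w i\<bar> * R)) * (\<bar>c'\<bar> + (\<Sum>i\<in>I. \<bar>w' i\<bar> * R))"
    using abs_affine_le[OF x] R_pos by (intro mult_mono) (auto intro!: add_nonneg_nonneg sum_nonneg)
  finally show "\<bar>indicator S (x k) * ((c + (\<Sum>i\<in>I. w i * x i)) * (c' + (\<Sum>i\<in>I. w' i * x i)))\<bar>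
      \<le> (\<bar>c\<bar> + (\<Sum>i\<in>I. \<bar>w i\<bar> * R)) * (\<bar>c'\<bar> + (\<Sum>i\<in>I. \<bar>w' i\<bar> * R))" .
qed

lemma integrable_trunc_normal_PiM_affine_power:
  assumes "finite I" "n \<le> 2"
  shows "integrable (trunc_normal_PiM \<sigma> R I) (\<lambda>x. (c + (\<Sum>i\<in>I. w i * x i)) ^ n)"
proof (rule integrable_trunc_normal_PiM_bounded[OF assms(1)])
  show "(\<lambda>x. (c + (\<Sum>i\<in>I. w i * x i)) ^ n) \<in> borel_measurable (trunc_normal_PiM \<sigma> R I)"
    using measurable_trunc_normal_PiM_affine by measurable
  fix x assume "\<forall>i\<in>I. \<bar>x i\<bar> \<le> R"
  then show "\<bar>(c + (\<Sum>i\<in>I. w i * x i)) ^ n\<bar> \<le> (\<bar>c\<bar> + (\<Sum>i\<in>I. \<bar>w i\<bar> * R)) ^ n"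
    unfolding power_abs by (intro power_mono abs_affine_le) auto
qed

lemma trunc_normal_affine_second_moment:
  "(\<integral>y. (b + v * y)\<^sup>2 \<partial>trunc_normal \<sigma> R) = b\<^sup>2 + v\<^sup>2 * trunc_normal_second_moment \<sigma> R"
proof -
  interpret prob_space "trunc_normal \<sigma> R" by (rule prob_space_trunc_normal)
  have "integrable (trunc_normal \<sigma> R) (\<lambda>y. y)"
    by (rule integrable_trunc_normal_bounded[where B=R]) auto
  moreover have "integrable (trunc_normal \<sigma> R) (\<lambda>y. y\<^sup>2)"
    by (rule integrable_trunc_normal_bounded[where B="R\<^sup>2"])
      (auto simp: abs_le_square_iff[symmetric])
  moreover have "(b + v * y)\<^sup>2 = b\<^sup>2 + (2 * b * v) * y + v\<^sup>2 * y\<^sup>2" for y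
    by (simp add: power2_eq_square algebra_simps)
  moreover have "prob UNIV = 1" using prob_space by simp
  ultimately show ?thesis
    by (simp add: trunc_normal_second_moment_def trunc_normal_mean_zero)
qed

lemma trunc_normal_PiM_affine_second_moment:
  assumes "finite I"
  shows "(\<integral>x. (c + (\<Sum>i\<in>I. w i * x i))\<^sup>2 \<partial>trunc_normal_PiM \<sigma> R I)
    = c\<^sup>2 + trunc_normal_second_moment \<sigma> R * (\<Sum>i\<in>I. (w i)\<^sup>2)"
  using assms
proof (induction I arbitrary: c rule: finite_induct)
  case empty
  interpret prob_space "trunc_normal_PiM \<sigma> R {}" by (rule prob_space_trunc_normal_PiM)
  show ?case by (simp add: prob_space)
next
  case (insert j I)
  interpret product_sigma_finite "\<lambda>_. trunc_normal \<sigma> R" by (rule product_sigma_finite_trunc_normal)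
  interpret P: prob_space "trunc_normal_PiM \<sigma> R I" by (rule prob_space_trunc_normal_PiM)
  have "(\<integral>x. (c + (\<Sum>i\<in>insert j I. w i * x i))\<^sup>2 \<partial>trunc_normal_PiM \<sigma> R (insert j I))
      = (\<integral>x. (\<integral>y. (c + (\<Sum>i\<in>insert j I. w i * (x(j := y)) i))\<^sup>2 \<partial>trunc_normal \<sigma> R)
           \<partial>trunc_normal_PiM \<sigma> R I)"
    using insert by (intro product_integral_insert integrable_trunc_normal_PiM_affine_power) auto
  also have "\<dots> = (\<integral>x. (\<integral>y. ((c + (\<Sum>i\<in>I. w i * x i)) + w j * y)\<^sup>2 \<partial>trunc_normal \<sigma> R)
      \<partial>trunc_normal_PiM \<sigma> R I)"
    unfolding sum_fun_upd_insert[OF insert(1,2)] by (simp only: add_ac)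
  also have "\<dots> = (\<integral>x. (c + (\<Sum>i\<in>I. w i * x i))\<^sup>2 + (w j)\<^sup>2 * trunc_normal_second_moment \<sigma> R
      \<partial>trunc_normal_PiM \<sigma> R I)"
    by (simp add: trunc_normal_affine_second_moment)
  also have "\<dots> = c\<^sup>2 + trunc_normal_second_moment \<sigma> R * (\<Sum>i\<in>insert j I. (w i)\<^sup>2)"
    using integrable_trunc_normal_PiM_affine_power[OF insert(1), of 2 c w] insert
    by (simp add: P.prob_space algebra_simps)
  finally show ?case .
qed

text \<open>Centredness of a linear combination follows from comparing the second moments of
  \<open>1 + X\<close> and \<open>X\<close>.\<close>

lemma trunc_normal_PiM_linear_mean:
  assumes "finite I"
  shows "(\<integral>x. (\<Sum>i\<in>I. w i * x i) \<partial>trunc_normal_PiM \<sigma> R I) = 0"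
proof -
  interpret P: prob_space "trunc_normal_PiM \<sigma> R I" by (rule prob_space_trunc_normal_PiM)
  have "(1 + (\<Sum>i\<in>I. w i * x i))\<^sup>2 = 1 + 2 * (\<Sum>i\<in>I. w i * x i) + (\<Sum>i\<in>I. w i * x i)\<^sup>2" for x
    by (simp add: power2_eq_square algebra_simps)
  then have "(\<integral>x. (1 + (\<Sum>i\<in>I. w i * x i))\<^sup>2 \<partial>trunc_normal_PiM \<sigma> R I)
      = 1 + 2 * (\<integral>x. (\<Sum>i\<in>I. w i * x i) \<partial>trunc_normal_PiM \<sigma> R I)
          + (\<integral>x. (\<Sum>i\<in>I. w i * x i)\<^sup>2 \<partial>trunc_normal_PiM \<sigma> R I)"
    using integrable_trunc_normal_PiM_affine_power[OF assms, of 1 0 w]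
      integrable_trunc_normal_PiM_affine_power[OF assms, of 2 0 w]
    by (simp add: P.prob_space)
  then show ?thesis
    using trunc_normal_PiM_affine_second_moment[OF assms, of 1 w]
      trunc_normal_PiM_affine_second_moment[OF assms, of 0 w] by simp
qed

lemma integrable_trunc_normal_indicator_affine_power:
  assumes [measurable]: "S \<in> sets borel"
  shows "integrable (trunc_normal \<sigma> R) (\<lambda>y. indicator S y * (a + w * y) ^ n)"
proof (rule integrable_trunc_normal_bounded[where B="(\<bar>a\<bar> + \<bar>w\<bar> * R) ^ n"])
  fix y :: real assume "\<bar>y\<bar> \<le> R"
  then have "\<bar>a + (\<Sum>i\<in>{0::nat}. w * y)\<bar> \<le> \<bar>a\<bar> + (\<Sum>i\<in>{0::nat}. \<bar>w\<bar> * R)"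
    by (intro abs_affine_le) auto
  then have "\<bar>a + w * y\<bar> ^ n \<le> (\<bar>a\<bar> + \<bar>w\<bar> * R) ^ n" by (intro power_mono) auto
  then show "\<bar>indicator S y * (a + w * y) ^ n\<bar> \<le> (\<bar>a\<bar> + \<bar>w\<bar> * R) ^ n"
    using R_pos by (auto split: split_indicator simp: power_abs)
qed measurable

text \<open>Restricting the first coordinate to \<open>S\<close> leaves the remaining independent centred
  coordinates untouched, so they contribute their unconditional second moment.\<close>

lemma trunc_normal_PiM_restricted_second_moment:
  fixes d :: nat
  assumes d: "d \<ge> 1" and [measurable]: "S \<in> sets borel"
  shows "(\<integral>x. indicator S (x 0) * (a + (\<Sum>i<d. w i * x i))\<^sup>2 \<partial>trunc_normal_PiM \<sigma> R {..<d})
    = (\<integral>y. indicator S y * (a + w 0 * y)\<^sup>2 \<partial>trunc_normal \<sigma> R)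
      + measure (trunc_normal \<sigma> R) S * trunc_normal_second_moment \<sigma> R * (\<Sum>i\<in>{1..<d}. (w i)\<^sup>2)"
proof -
  define I where "I = {1..<d}"
  have I: "finite I" "0 \<notin> I" unfolding I_def by auto
  have d_eq: "{..<d} = insert 0 I" unfolding I_def using d by auto
  interpret product_sigma_finite "\<lambda>_. trunc_normal \<sigma> R" by (rule product_sigma_finite_trunc_normal)
  interpret T: prob_space "trunc_normal \<sigma> R" by (rule prob_space_trunc_normal)
  interpret P: prob_space "trunc_normal_PiM \<sigma> R I" by (rule prob_space_trunc_normal_PiM)
  define f where "f k y = indicator S y * (a + w 0 * y) ^ k" for k :: nat and y :: real
  define A\<^sub>k where "A\<^sub>k k = (\<integral>y. f k y \<partial>trunc_normal \<sigma> R)" for k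
  have "integrable (trunc_normal \<sigma> R) (f k)" for k
    unfolding f_def by (rule integrable_trunc_normal_indicator_affine_power) simp
  moreover have "indicator S y * (a + (w 0 * y + L))\<^sup>2 = f 2 y + 2 * L * f 1 y + L\<^sup>2 * f 0 y"
    for y L unfolding f_def by (simp add: power2_eq_square algebra_simps)
  ultimately have inner: "(\<integral>y. indicator S y * (a + (w 0 * y + L))\<^sup>2 \<partial>trunc_normal \<sigma> R)
      = A\<^sub>k 2 + 2 * L * A\<^sub>k 1 + L\<^sup>2 * A\<^sub>k 0" for L
    unfolding A\<^sub>k_def by simp
  have "(\<integral>x. indicator S (x 0) * (a + (\<Sum>i<d. w i * x i))\<^sup>2 \<partial>trunc_normal_PiM \<sigma> R {..<d})
      = (\<integral>x. (\<integral>y. indicator S ((x(0 := y)) 0) * (a + (\<Sum>i\<in>insert 0 I. w i * (x(0 := y)) i))\<^sup>2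
          \<partial>trunc_normal \<sigma> R) \<partial>trunc_normal_PiM \<sigma> R I)"
    unfolding d_eq
    using integrable_trunc_normal_PiM_indicator_affine_product[of "insert 0 I" 0 S a w a w] I
    by (intro product_integral_insert) (auto simp: power2_eq_square)
  also have "\<dots> = (\<integral>x. A\<^sub>k 2 + 2 * (\<Sum>i\<in>I. w i * x i) * A\<^sub>k 1 + (\<Sum>i\<in>I. w i * x i)\<^sup>2 * A\<^sub>k 0
      \<partial>trunc_normal_PiM \<sigma> R I)"
    unfolding sum_fun_upd_insert[OF I] by (simp add: inner)
  also have "\<dots> = A\<^sub>k 2 + A\<^sub>k 0 * trunc_normal_second_moment \<sigma> R * (\<Sum>i\<in>I. (w i)\<^sup>2)"
    using integrable_trunc_normal_PiM_affine_power[OF I(1), of 1 0 w]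
      integrable_trunc_normal_PiM_affine_power[OF I(1), of 2 0 w]
      trunc_normal_PiM_linear_mean[OF I(1), of w] trunc_normal_PiM_affine_second_moment[OF I(1), of 0 w]
    by (simp add: P.prob_space algebra_simps)
  finally show ?thesis unfolding A\<^sub>k_def f_def I_def by (simp add: space_trunc_normal)
qed

section \<open>The rotated perturbation\<close>

lemma cond_second_moment_pert_dist:
  fixes d :: nat and b :: real and Q :: "nat \<Rightarrow> nat \<Rightarrow> real" and \<beta> \<mu> :: "nat \<Rightarrow> real"
  defines "S \<equiv> {y. b \<le> vnorm d \<beta> * y}"
  assumes d: "d \<ge> 1"
    and Q\<beta>: "\<forall>i<d. (\<Sum>j<d. Q i j * \<beta> j) = (if i = 0 then vnorm d \<beta> else 0)"
    and S_pos: "measure (trunc_normal \<sigma> R) S > 0"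
    and ij: "i < d" "j < d"
  shows "cond_second_moment d (pert_dist d \<sigma> R Q) \<beta> \<mu> b i j =
    (\<integral>z. indicator S (z 0) * ((\<mu> i + (\<Sum>l<d. Q l i * z l)) * (\<mu> j + (\<Sum>l<d. Q l j * z l)))
       \<partial>trunc_normal_PiM \<sigma> R {..<d}) / measure (trunc_normal \<sigma> R) S"
proof -
  define P where "P = trunc_normal_PiM \<sigma> R {..<d}"
  define N where "N = (\<Pi>\<^sub>M j\<in>{..<d}. lborel :: real measure)"
  define F where "F = (\<lambda>z::nat \<Rightarrow> real. \<lambda>j\<in>{..<d}. \<Sum>i<d. Q i j * z i)"
  define E where "E = {e \<in> space N. b \<le> dotp d \<beta> e}"
  interpret P: prob_space P unfolding P_def by (rule prob_space_trunc_normal_PiM)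
  have S_borel[measurable]: "S \<in> sets borel" unfolding S_def by measurable
  have N_component[measurable]: "(\<lambda>z. z l) \<in> borel_measurable N" if "l < d" for l
    using measurable_component_singleton[of l "{..<d}" "\<lambda>_. lborel"] that
    unfolding N_def measurable_cong_sets[OF refl sets_lborel] by simp
  have F_meas[measurable]: "F \<in> measurable P N"
    unfolding F_def N_def
  proof (rule measurable_restrict)
    fix j
    show "(\<lambda>z. \<Sum>i<d. Q i j * z i) \<in> measurable P lborel"
      using measurable_trunc_normal_PiM_affine[where c=0 and I="{..<d}" and w="\<lambda>i. Q i j"]
      unfolding P_def measurable_cong_sets[OF refl sets_lborel] by simp
  qed
  have [measurable]: "E \<in> sets N"
    unfolding E_def dotp_def by measurable
  have rotate: "dotp d \<beta> (F z) = vnorm d \<beta> * z 0" for z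
  proof -
    have "dotp d \<beta> (F z) = dotp d \<beta> (\<lambda>j. \<Sum>i<d. Q i j * z i)" unfolding dotp_def F_def by simp
    then show ?thesis using dotp_rotation[OF d Q\<beta>] by simp
  qed
  have preimage: "F -` E \<inter> space P = {z \<in> space P. z 0 \<in> S}"
    using measurable_space[OF F_meas] unfolding E_def S_def by (auto simp: rotate)
  have "measure P {z \<in> space P. z 0 \<in> S} = measure (trunc_normal \<sigma> R) S"
    unfolding P_def using d S_borel by (intro measure_trunc_normal_PiM_component) auto
  then have E_measure: "measure P (F -` E \<inter> space P) = measure (trunc_normal \<sigma> R) S"
    unfolding preimage .
  have "cond_second_moment d (pert_dist d \<sigma> R Q) \<beta> \<mu> b i j
      = integral\<^sup>L (cond_measure (distr P N F) E) (\<lambda>e. (\<mu> i + e i) * (\<mu> j + e j))"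
    unfolding cond_second_moment_def pert_dist_def P_def N_def F_def E_def by simp
  also have "\<dots> = (\<integral>z. indicator E (F z) * ((\<mu> i + F z i) * (\<mu> j + F z j)) \<partial>P)
      / measure (trunc_normal \<sigma> R) S"
    using ij S_pos E_measure
    by (subst integral_cond_measure_distr) (auto simp: P.finite_measure_axioms)
  also have "\<dots> = (\<integral>z. indicator S (z 0) * ((\<mu> i + (\<Sum>l<d. Q l i * z l)) * (\<mu> j + (\<Sum>l<d. Q l j * z l)))
      \<partial>P) / measure (trunc_normal \<sigma> R) S"
    using preimage ij unfolding F_def
    by (intro arg_cong[where f="\<lambda>x. x / _"] Bochner_Integration.integral_cong refl)
      (auto split: split_indicator)
  finally show ?thesis unfolding P_def .
qed

lemma pert_dist_quadratic_form:
  fixes d :: nat and b :: real and Q :: "nat \<Rightarrow> nat \<Rightarrow> real" and \<beta> \<mu> v :: "nat \<Rightarrow> real"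
  defines "S \<equiv> {y. b \<le> vnorm d \<beta> * y}" and "w \<equiv> \<lambda>l. \<Sum>i<d. Q l i * v i"
  assumes d: "d \<ge> 1"
    and Q\<beta>: "\<forall>i<d. (\<Sum>j<d. Q i j * \<beta> j) = (if i = 0 then vnorm d \<beta> else 0)"
    and S_pos: "measure (trunc_normal \<sigma> R) S > 0"
  shows "(\<Sum>i<d. \<Sum>j<d. v i * cond_second_moment d (pert_dist d \<sigma> R Q) \<beta> \<mu> b i j * v j)
    = ((\<integral>y. indicator S y * ((\<Sum>i<d. v i * \<mu> i) + w 0 * y)\<^sup>2 \<partial>trunc_normal \<sigma> R)
       + measure (trunc_normal \<sigma> R) S * trunc_normal_second_moment \<sigma> R * (\<Sum>i\<in>{1..<d}. (w i)\<^sup>2))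
      / measure (trunc_normal \<sigma> R) S"
proof -
  define a where "a = (\<Sum>i<d. v i * \<mu> i)"
  define G where "G i j z = indicator S (z 0) * ((\<mu> i + (\<Sum>l<d. Q l i * z l)) * (\<mu> j + (\<Sum>l<d. Q l j * z l)))"
    for i j and z :: "nat \<Rightarrow> real"
  let ?P = "trunc_normal_PiM \<sigma> R {..<d}" and ?m = "measure (trunc_normal \<sigma> R) S"
  have [measurable]: "S \<in> sets borel" unfolding S_def by measurable
  have G_int: "integrable ?P (G i j)" for i j
    unfolding G_def using d by (intro integrable_trunc_normal_PiM_indicator_affine_product) auto
  have G_sum: "(\<Sum>i<d. \<Sum>j<d. v i * v j * G i j z) = indicator S (z 0) * (a + (\<Sum>l<d. w l * z l))\<^sup>2"
    for z
  proof -
    have "(\<Sum>i<d. \<Sum>j<d. v i * v j * G i j z) = indicator S (z 0) *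
        (\<Sum>i<d. \<Sum>j<d. v i * v j * ((\<mu> i + (\<Sum>l<d. Q l i * z l)) * (\<mu> j + (\<Sum>l<d. Q l j * z l))))"
      unfolding G_def by (simp add: sum_distrib_left mult_ac)
    then show ?thesis unfolding quadratic_form_rotated_affine a_def w_def .
  qed
  have "(\<Sum>i<d. \<Sum>j<d. v i * cond_second_moment d (pert_dist d \<sigma> R Q) \<beta> \<mu> b i j * v j)
      = (\<Sum>i<d. \<Sum>j<d. (\<integral>z. v i * v j * G i j z \<partial>?P) / ?m)"
  proof (intro sum.cong refl)
    fix i j assume "i \<in> {..<d}" "j \<in> {..<d}"
    then have "cond_second_moment d (pert_dist d \<sigma> R Q) \<beta> \<mu> b i j = (\<integral>z. G i j z \<partial>?P) / ?m"
      using cond_second_moment_pert_dist[OF d Q\<beta>] S_pos unfolding G_def S_def by simp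
    then show "v i * cond_second_moment d (pert_dist d \<sigma> R Q) \<beta> \<mu> b i j * v j
        = (\<integral>z. v i * v j * G i j z \<partial>?P) / ?m"
      by simp
  qed
  also have "\<dots> = (\<integral>z. (\<Sum>i<d. \<Sum>j<d. v i * v j * G i j z) \<partial>?P) / ?m"
    using G_int by (simp add: Bochner_Integration.integral_sum sum_divide_distrib[symmetric])
  also have "\<dots> = (\<integral>z. indicator S (z 0) * (a + (\<Sum>l<d. w l * z l))\<^sup>2 \<partial>?P) / ?m"
    unfolding G_sum ..
  also have "\<dots> = ((\<integral>y. indicator S y * (a + w 0 * y)\<^sup>2 \<partial>trunc_normal \<sigma> R)
      + ?m * trunc_normal_second_moment \<sigma> R * (\<Sum>i\<in>{1..<d}. (w i)\<^sup>2)) / ?m"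
    by (subst trunc_normal_PiM_restricted_second_moment[OF d]) simp_all
  finally show ?thesis unfolding a_def .
qed

end

lemma pert_dist_quadratic_form_lower:
  fixes Q :: "nat \<Rightarrow> nat \<Rightarrow> real" and \<beta> \<mu> v :: "nat \<Rightarrow> real"
  assumes d: "d \<ge> 1" and \<sigma>_pos: "\<sigma> > 0" and \<sigma>_le: "\<sigma> \<le> r" and r_le: "2 * r \<le> R"
    and Q: "orthonormal_mat d Q"
    and Q\<beta>: "\<forall>i<d. (\<Sum>j<d. Q i j * \<beta> j) = (if i = 0 then vnorm d \<beta> else 0)"
    and b: "b \<le> r * vnorm d \<beta>"
  shows "\<sigma>^4 / r\<^sup>2 / 1000 * (\<Sum>i<d. (v i)\<^sup>2)
    \<le> (\<Sum>i<d. \<Sum>j<d. v i * cond_second_moment d (pert_dist d \<sigma> R Q) \<beta> \<mu> b i j * v j)"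
proof -
  have R_pos: "R > 0" and r_pos: "r > 0" using \<sigma>_pos \<sigma>_le r_le by auto
  define c where "c = \<sigma>^4 / r\<^sup>2 / 1000"
  define S where "S = {y. b \<le> vnorm d \<beta> * y}"
  define m where "m = measure (trunc_normal \<sigma> R) S"
  define a where "a = (\<Sum>i<d. v i * \<mu> i)"
  define w where "w l = (\<Sum>i<d. Q l i * v i)" for l
  define s\<^sub>2 where "s\<^sub>2 = trunc_normal_second_moment \<sigma> R"
  define I\<^sub>0 where "I\<^sub>0 = (\<integral>y. indicator S y * (a + w 0 * y)\<^sup>2 \<partial>trunc_normal \<sigma> R)"
  have S_borel: "S \<in> sets borel" unfolding S_def by measurable
  have "vnorm d \<beta> \<ge> 0" unfolding vnorm_def dotp_def by (auto intro!: sum_nonneg)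
  then obtain u where u: "S \<inter> {-R..R} = {u..R}" "- R \<le> u" "u \<le> r"
    using halfline_inter_Icc[OF _ b r_le r_pos] unfolding S_def by blast
  have m_pos: "m > 0"
    unfolding m_def measure_trunc_normal[OF \<sigma>_pos R_pos S_borel u(1)]
    using u r_pos r_le normal_mass_Icc_pos[OF \<sigma>_pos R_pos]
    by (intro divide_pos_pos set_integral_normal_density_pos[OF \<sigma>_pos]) auto
  have "c * (w 0)\<^sup>2 * m \<le> I\<^sub>0"
    unfolding c_def m_def I\<^sub>0_def using u S_borel
    by (intro trunc_normal_restricted_quadratic_lower[OF \<sigma>_pos R_pos \<sigma>_le r_le]) auto
  moreover have "m * c * (\<Sum>i\<in>{1..<d}. (w i)\<^sup>2) \<le> m * s\<^sub>2 * (\<Sum>i\<in>{1..<d}. (w i)\<^sup>2)"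
    unfolding c_def s\<^sub>2_def using m_pos trunc_normal_second_moment_lower[OF \<sigma>_pos R_pos \<sigma>_le r_le]
    by (intro mult_right_mono mult_left_mono sum_nonneg) auto
  moreover have "(\<Sum>i<d. (v i)\<^sup>2) = (w 0)\<^sup>2 + (\<Sum>i\<in>{1..<d}. (w i)\<^sup>2)"
  proof -
    have "(\<Sum>i<d. (v i)\<^sup>2) = (\<Sum>l<d. (w l)\<^sup>2)"
      unfolding w_def by (rule orthonormal_mat_sum_squares[OF Q, symmetric])
    moreover have "{..<d} = insert 0 {1..<d}" using d by auto
    ultimately show ?thesis by simp
  qed
  then have "c * (\<Sum>i<d. (v i)\<^sup>2) * m = c * (w 0)\<^sup>2 * m + m * c * (\<Sum>i\<in>{1..<d}. (w i)\<^sup>2)"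
    by (simp add: algebra_simps)
  ultimately have "c * (\<Sum>i<d. (v i)\<^sup>2) * m \<le> I\<^sub>0 + m * s\<^sub>2 * (\<Sum>i\<in>{1..<d}. (w i)\<^sup>2)"
    by linarith
  then have "c * (\<Sum>i<d. (v i)\<^sup>2) \<le> (I\<^sub>0 + m * s\<^sub>2 * (\<Sum>i\<in>{1..<d}. (w i)\<^sup>2)) / m"
    using m_pos by (simp add: pos_le_divide_eq)
  also have "\<dots> = (\<Sum>i<d. \<Sum>j<d. v i * cond_second_moment d (pert_dist d \<sigma> R Q) \<beta> \<mu> b i j * v j)"
    using pert_dist_quadratic_form[OF \<sigma>_pos R_pos d Q\<beta>] m_pos
    unfolding I\<^sub>0_def m_def s\<^sub>2_def a_def w_def S_def by simp
  finally show ?thesis unfolding c_def .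
qed

theorem lemma7:
  "\<exists>c>0. \<forall>(d::nat) (\<sigma>::real) (r::real) (R::real).
     d \<ge> 1 \<longrightarrow> \<sigma> > 0 \<longrightarrow> R \<ge> 2 * r \<longrightarrow> r \<ge> \<sigma> \<longrightarrow>
     trunc_adv_diverse d \<sigma> R r (c * \<sigma> ^ 4 / r\<^sup>2)"
proof (intro exI[of _ "1/1000"] conjI allI impI)
  fix d :: nat and \<sigma> r R :: real
  assume d: "d \<ge> 1" and \<sigma>_pos: "\<sigma> > 0" and r_le: "R \<ge> 2 * r" and \<sigma>_le: "r \<ge> \<sigma>"
  show "trunc_adv_diverse d \<sigma> R r (1/1000 * \<sigma> ^ 4 / r\<^sup>2)"
    unfolding trunc_adv_diverse_def diverse_for_def
  proof (intro allI impI)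
    fix \<beta> Q \<mu> b
    assume Q: "orthonormal_mat d Q"
      and Q\<beta>: "\<forall>i<d. (\<Sum>j<d. Q i j * \<beta> j) = (if i = 0 then vnorm d \<beta> else 0)"
      and b: "b \<le> r * vnorm d \<beta>"
    have "\<sigma>^4 / r\<^sup>2 / 1000 \<le> lambda_min d (cond_second_moment d (pert_dist d \<sigma> R Q) \<beta> \<mu> b)"
    proof (rule lambda_min_ge_quadratic_form[OF d])
      show "cond_second_moment d (pert_dist d \<sigma> R Q) \<beta> \<mu> b i j
          = cond_second_moment d (pert_dist d \<sigma> R Q) \<beta> \<mu> b j i" for i j
        unfolding cond_second_moment_def by (simp add: mult.commute)
    qed (rule pert_dist_quadratic_form_lower[OF d \<sigma>_pos \<sigma>_le r_le Q Q\<beta> b])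
    then show "1/1000 * \<sigma> ^ 4 / r\<^sup>2 \<le> lambda_min d (cond_second_moment d (pert_dist d \<sigma> R Q) \<beta> \<mu> b)"
      by simp
  qed
qed simp

end
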